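(* Let $h\ge2$ be an integer and let $G_h$ be the directed graph with vertices $s,t,u_1,\dots,u_h,v_1,\dots,v_h$ and arcs: $(u_j,u_{j+1})$ and $(v_j,v_{j+1})$ for $1\le j\le h-1$, each of weight $1$; and $(s,u_1),(u_h,s),(t,v_1),(v_h,t)$, and $(u_{i+1},v_i),(v_{i+1},u_i)$ for $1\le i\le h-1$, each of weight $+\infty$. Then the optimum value of the LP relaxation of $st$-Bi-Cut on $G_h$ equals $2(h-1)/h$, and every optimal solution $\mathbf{x}$ satisfies $x(u_i,u_{i+1})+x(v_i,v_{i+1})=2/h$ for all $1\le i\le h-1$, and hence $x_e\le 2/h$ for every arc $e$. Consequently, for every positive integer $\ell$, taking $h>2\ell$ gives a two-terminal instance of $\textsc{Dir-MC}$ for which no optimal solution of $\textsc{Dir-MC-Rel}$ is $1/\ell$-integral.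
   Context: The LP relaxation for two terminals $s,t$: minimize $\sum_e w_ex_e$ subject to $\sum_{e\in p}x_e\ge1$ for every directed $s$–$t$ path and every directed $t$–$s$ path $p$, and $x_e\ge0$; arcs of weight $+\infty$ contribute $0$ to the objective if $x_e=0$ and $+\infty$ otherwise (so any finite-cost solution has $x_e=0$ on them). A solution is $1/\ell$-integral if every $x_e$ is an integer multiple of $1/\ell$. *)

theory Defs
  imports Complex_Main "HOL-Library.Extended_Real"
begin

definition dpath :: "('v \<times> 'v) set \<Rightarrow> 'v list \<Rightarrow> 'v \<Rightarrow> 'v \<Rightarrow> bool" where
  "dpath A p a b \<longleftrightarrow> p \<noteq> [] \<and> hd p = a \<and> last p = b \<and> distinct p \<and>
     (\<forall>i. Suc i < length p \<longrightarrow> (p ! i, p ! Suc i) \<in> A)"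

definition path_val :: "('v \<times> 'v \<Rightarrow> real) \<Rightarrow> 'v list \<Rightarrow> real" where
  "path_val x p = (\<Sum>i | Suc i < length p. x (p ! i, p ! Suc i))"

text \<open>Finite-cost feasible solutions: nonnegative, zero on arcs of weight +infinity,
  and every directed s-t and t-s path has x-length at least 1.\<close>
definition lp_feasible ::
  "('v \<times> 'v) set \<Rightarrow> ('v \<times> 'v \<Rightarrow> ereal) \<Rightarrow> 'v \<Rightarrow> 'v \<Rightarrow> ('v \<times> 'v \<Rightarrow> real) \<Rightarrow> bool" where
  "lp_feasible A w s t x \<longleftrightarrow>
     (\<forall>e\<in>A. 0 \<le> x e) \<and> (\<forall>e\<in>A. w e = \<infinity> \<longrightarrow> x e = 0) \<and>
     (\<forall>p. dpath A p s t \<or> dpath A p t s \<longrightarrow> 1 \<le> path_val x p)"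

text \<open>Objective; arcs of infinite weight contribute 0 since x vanishes on them.\<close>
definition lp_cost :: "('v \<times> 'v) set \<Rightarrow> ('v \<times> 'v \<Rightarrow> ereal) \<Rightarrow> ('v \<times> 'v \<Rightarrow> real) \<Rightarrow> real" where
  "lp_cost A w x = (\<Sum>e\<in>{e\<in>A. w e \<noteq> \<infinity>}. real_of_ereal (w e) * x e)"

definition lp_optimal ::
  "('v \<times> 'v) set \<Rightarrow> ('v \<times> 'v \<Rightarrow> ereal) \<Rightarrow> 'v \<Rightarrow> 'v \<Rightarrow> ('v \<times> 'v \<Rightarrow> real) \<Rightarrow> bool" where
  "lp_optimal A w s t x \<longleftrightarrow> lp_feasible A w s t x \<and>
     (\<forall>y. lp_feasible A w s t y \<longrightarrow> lp_cost A w x \<le> lp_cost A w y)"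

definition lp_opt_value ::
  "('v \<times> 'v) set \<Rightarrow> ('v \<times> 'v \<Rightarrow> ereal) \<Rightarrow> 'v \<Rightarrow> 'v \<Rightarrow> real \<Rightarrow> bool" where
  "lp_opt_value A w s t v \<longleftrightarrow>
     (\<exists>x. lp_feasible A w s t x \<and> lp_cost A w x = v) \<and>
     (\<forall>x. lp_feasible A w s t x \<longrightarrow> v \<le> lp_cost A w x)"

definition frac_integral :: "nat \<Rightarrow> ('v \<times> 'v) set \<Rightarrow> ('v \<times> 'v \<Rightarrow> real) \<Rightarrow> bool" where
  "frac_integral l A x \<longleftrightarrow> (\<forall>e\<in>A. \<exists>k::int. x e = real_of_int k / real l)"

datatype gv = S | T | U nat | V nat

definition unit_arcs :: "nat \<Rightarrow> (gv \<times> gv) set" where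
  "unit_arcs h = {(U j, U (Suc j)) | j. 1 \<le> j \<and> j \<le> h - 1}
              \<union> {(V j, V (Suc j)) | j. 1 \<le> j \<and> j \<le> h - 1}"

definition Gh_arcs :: "nat \<Rightarrow> (gv \<times> gv) set" where
  "Gh_arcs h = unit_arcs h \<union> {(S, U 1), (U h, S), (T, V 1), (V h, T)}
     \<union> {(U (Suc i), V i) | i. 1 \<le> i \<and> i \<le> h - 1}
     \<union> {(V (Suc i), U i) | i. 1 \<le> i \<and> i \<le> h - 1}"

definition Gh_w :: "nat \<Rightarrow> gv \<times> gv \<Rightarrow> ereal" where
  "Gh_w h e = (if e \<in> unit_arcs h then 1 else \<infinity>)"

end

theory Submission
  imports Defs
begin

text \<open>For each level i, the s-t path s, u_1, ..., u_{i+1}, v_i, ..., v_h, t and the t-s path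
  t, v_1, ..., v_{i+1}, u_i, ..., u_h, s use, besides arcs of infinite weight, every unit arc once
  and the two unit arcs of level i twice. Feasibility thus gives
  cost(x) + x(u_i, u_{i+1}) + x(v_i, v_{i+1}) \<ge> 2 for each of the h - 1 levels, and summing yields
  h cost(x) \<ge> 2(h - 1). Putting 1/h on every unit arc attains this bound (feasibility is
  certified by potentials), so at an optimum every level inequality is tight: each level carries
  exactly 2/h. For h > 2l this is not a sum of two multiples of 1/l.\<close>

lemma path_val_Nil [simp]: "path_val x [] = 0"
  and path_val_singleton [simp]: "path_val x [a] = 0"
  by (simp_all add: path_val_def)

lemma path_val_Cons_Cons [simp]: "path_val x (a # b # p) = x (a, b) + path_val x (b # p)"
proof -
  have "{i. Suc i < length (a # b # p)} = insert 0 (Suc ` {i. Suc i < length (b # p)})"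
    by (auto simp: image_iff) (metis Suc_less_eq gr0_implies_Suc not_gr_zero)
  then show ?thesis
    unfolding path_val_def by (simp add: sum.reindex)
qed

lemma path_val_Cons: "p \<noteq> [] \<Longrightarrow> path_val x (a # p) = x (a, hd p) + path_val x p"
  by (cases p) auto

lemma path_val_append:
  "p \<noteq> [] \<Longrightarrow> q \<noteq> [] \<Longrightarrow> path_val x (p @ q) = path_val x p + x (last p, hd q) + path_val x q"
  by (induction p rule: induct_list012) (auto simp: path_val_Cons)

lemma path_val_map_upt:
  "m \<le> n \<Longrightarrow> path_val x (map f [m..<Suc n]) = (\<Sum>j = m..<n. x (f j, f (Suc j)))"
proof (induction n)
  case (Suc n)
  show ?case
  proof (cases "m = Suc n")
    case False
    with Suc.prems have "m \<le> n" by simp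
    have "path_val x (map f [m..<Suc (Suc n)]) = path_val x (map f [m..<Suc n] @ [f (Suc n)])"
      by simp
    also have "\<dots> = path_val x (map f [m..<Suc n]) + x (f n, f (Suc n))"
      using \<open>m \<le> n\<close> by (subst path_val_append) (auto simp: last_map)
    finally show ?thesis using Suc.IH \<open>m \<le> n\<close> by simp
  qed simp
qed simp

lemma successively_potential_le_path_val:
  assumes "\<And>a b. (a, b) \<in> A \<Longrightarrow> phi b - phi a \<le> x (a, b)"
    and "successively (\<lambda>a b. (a, b) \<in> A) p" and "p \<noteq> []"
  shows "phi (last p) - phi (hd p) \<le> path_val x p"
  using assms(2,3)
proof (induction p rule: induct_list012)
  case (3 a b p)
  then have "phi (last (b # p)) - phi b \<le> path_val x (b # p)" "(a, b) \<in> A" by auto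
  with assms(1)[of a b] show ?case by simp
qed simp_all

lemma dpath_iff_successively: "dpath A p a b \<longleftrightarrow>
    p \<noteq> [] \<and> hd p = a \<and> last p = b \<and> distinct p \<and> successively (\<lambda>u v. (u, v) \<in> A) p"
  by (auto simp: dpath_def successively_conv_nth)

lemma dpath_potential_le_path_val:
  assumes "\<And>a b. (a, b) \<in> A \<Longrightarrow> phi b - phi a \<le> x (a, b)" and "dpath A p a b"
  shows "phi b - phi a \<le> path_val x p"
  using successively_potential_le_path_val[of A phi x p] assms
  by (auto simp: dpath_iff_successively)

lemma lp_feasibleI_potentials:
  assumes "\<forall>e\<in>A. 0 \<le> x e" and "\<forall>e\<in>A. w e = \<infinity> \<longrightarrow> x e = 0"
    and "\<And>a b. (a, b) \<in> A \<Longrightarrow> phi b - phi a \<le> x (a, b)" and "1 \<le> phi t - phi s"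
    and "\<And>a b. (a, b) \<in> A \<Longrightarrow> psi b - psi a \<le> x (a, b)" and "1 \<le> psi s - psi t"
  shows "lp_feasible A w s t x"
  unfolding lp_feasible_def
proof (intro conjI allI impI)
  fix p
  assume "dpath A p s t \<or> dpath A p t s"
  then show "1 \<le> path_val x p"
    using assms dpath_potential_le_path_val[of A phi x p] dpath_potential_le_path_val[of A psi x p]
    by force
qed (use assms in auto)

definition cross_path :: "'v \<Rightarrow> (nat \<Rightarrow> 'v) \<Rightarrow> (nat \<Rightarrow> 'v) \<Rightarrow> 'v \<Rightarrow> nat \<Rightarrow> nat \<Rightarrow> 'v list" where
  "cross_path a X Y b h i = a # map X [1..<Suc (Suc i)] @ map Y [i..<Suc h] @ [b]"

lemma path_val_cross_path:
  assumes "1 \<le> i" "i < h"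
  shows "path_val x (cross_path a X Y b h i) = x (a, X 1) + (\<Sum>j = 1..<Suc i. x (X j, X (Suc j)))
     + x (X (Suc i), Y i) + (\<Sum>j = i..<h. x (Y j, Y (Suc j))) + x (Y h, b)"
proof -
  have "hd (map X [1..<Suc (Suc i)] @ q) = X 1" for q
    by (simp add: upt_conv_Cons del: upt_Suc)
  then show ?thesis
    unfolding cross_path_def using assms
    by (simp add: path_val_Cons path_val_append path_val_map_upt last_map hd_map del: upt_Suc)
qed

lemma successively_upt:
  assumes "\<And>j. m \<le> j \<Longrightarrow> Suc j < n \<Longrightarrow> P j (Suc j)"
  shows "successively P [m..<n]"
  unfolding successively_conv_nth using assms by auto

lemma dpath_cross_path:
  assumes "1 \<le> i" "i < h"
  shows "dpath (Gh_arcs h) (cross_path S U V T h i) S T"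
    and "dpath (Gh_arcs h) (cross_path T V U S h i) T S"
  using assms
  by (auto simp: dpath_iff_successively cross_path_def distinct_map inj_on_def hd_append hd_map
      last_map successively_append_iff successively_Cons successively_map Gh_arcs_def unit_arcs_def
      intro!: successively_upt)

lemma lp_cost_Gh: "lp_cost (Gh_arcs h) (Gh_w h) x =
   (\<Sum>j = 1..<h. x (U j, U (Suc j))) + (\<Sum>j = 1..<h. x (V j, V (Suc j)))"
proof -
  have "{e \<in> Gh_arcs h. Gh_w h e \<noteq> \<infinity>} = unit_arcs h"
    by (auto simp: Gh_w_def Gh_arcs_def)
  then have "lp_cost (Gh_arcs h) (Gh_w h) x = (\<Sum>e\<in>unit_arcs h. x e)"
    unfolding lp_cost_def by (auto simp: Gh_w_def intro!: sum.cong)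
  also have "unit_arcs h = (\<lambda>j. (U j, U (Suc j))) ` {1..<h} \<union> (\<lambda>j. (V j, V (Suc j))) ` {1..<h}"
    unfolding unit_arcs_def by auto
  also have "(\<Sum>e\<in>\<dots>. x e) = (\<Sum>e\<in>(\<lambda>j. (U j, U (Suc j))) ` {1..<h}. x e)
      + (\<Sum>e\<in>(\<lambda>j. (V j, V (Suc j))) ` {1..<h}. x e)"
    by (rule sum.union_disjoint) auto
  also have "\<dots> = (\<Sum>j = 1..<h. x (U j, U (Suc j))) + (\<Sum>j = 1..<h. x (V j, V (Suc j)))"
    by (subst (1 2) sum.reindex) (auto simp: inj_on_def)
  finally show ?thesis .
qed

lemma lp_feasible_Gh_infinite_arcs:
  assumes "lp_feasible (Gh_arcs h) (Gh_w h) S T x" and "1 \<le> i" "i < h"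
  shows "x (S, U 1) = 0" "x (U h, S) = 0" "x (T, V 1) = 0" "x (V h, T) = 0"
    "x (U (Suc i), V i) = 0" "x (V (Suc i), U i) = 0"
  using assms unfolding lp_feasible_def by (auto simp: Gh_arcs_def Gh_w_def unit_arcs_def)

lemma sum_atLeastLessThan_overlap:
  fixes f :: "nat \<Rightarrow> 'a::comm_monoid_add"
  assumes "m \<le> i" "i < n"
  shows "(\<Sum>j = m..<Suc i. f j) + (\<Sum>j = i..<n. f j) = (\<Sum>j = m..<n. f j) + f i"
proof -
  have "(\<Sum>j = m..<Suc i. f j) + (\<Sum>j = i..<n. f j) = (\<Sum>j = m..<i. f j) + (\<Sum>j = i..<n. f j) + f i"
    using assms by (simp add: sum.atLeastLessThan_Suc ac_simps)
  also have "\<dots> = (\<Sum>j = m..<n. f j) + f i"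
    using assms by (simp add: sum.atLeastLessThan_concat)
  finally show ?thesis .
qed

lemma lp_feasible_Gh_level_bound:
  assumes F: "lp_feasible (Gh_arcs h) (Gh_w h) S T x" and i: "1 \<le> i" "i < h"
  shows "2 \<le> lp_cost (Gh_arcs h) (Gh_w h) x + x (U i, U (Suc i)) + x (V i, V (Suc i))"
proof -
  have "1 \<le> path_val x (cross_path S U V T h i)" "1 \<le> path_val x (cross_path T V U S h i)"
    using F dpath_cross_path[OF i] unfolding lp_feasible_def by auto
  then have "1 \<le> (\<Sum>j = 1..<Suc i. x (U j, U (Suc j))) + (\<Sum>j = i..<h. x (V j, V (Suc j)))"
    and "1 \<le> (\<Sum>j = 1..<Suc i. x (V j, V (Suc j))) + (\<Sum>j = i..<h. x (U j, U (Suc j)))"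
    using lp_feasible_Gh_infinite_arcs[OF F i] by (simp_all add: path_val_cross_path[OF i])
  then show ?thesis
    using i sum_atLeastLessThan_overlap[of 1 i h "\<lambda>j. x (U j, U (Suc j))"]
      sum_atLeastLessThan_overlap[of 1 i h "\<lambda>j. x (V j, V (Suc j))"]
    unfolding lp_cost_Gh by linarith
qed

lemma lp_feasible_Gh_cost_ge:
  assumes F: "lp_feasible (Gh_arcs h) (Gh_w h) S T x" and h: "2 \<le> h"
  shows "2 * (real h - 1) / real h \<le> lp_cost (Gh_arcs h) (Gh_w h) x"
proof -
  let ?c = "lp_cost (Gh_arcs h) (Gh_w h) x"
  have "(\<Sum>i = 1..<h. 2::real) \<le> (\<Sum>i = 1..<h. ?c + x (U i, U (Suc i)) + x (V i, V (Suc i)))"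
    by (rule sum_mono) (use lp_feasible_Gh_level_bound[OF F] in auto)
  also have "\<dots> = real (h - 1) * ?c + ?c"
    by (simp add: sum.distrib lp_cost_Gh)
  finally have "2 * (real h - 1) \<le> real h * ?c"
    using h by (simp add: of_nat_diff algebra_simps)
  then show ?thesis
    using h by (simp add: pos_divide_le_eq mult.commute)
qed

definition uniform_solution :: "nat \<Rightarrow> gv \<times> gv \<Rightarrow> real" where
  "uniform_solution h e = (if e \<in> unit_arcs h then 1 / real h else 0)"

lemma lp_cost_uniform_solution:
  assumes "2 \<le> h"
  shows "lp_cost (Gh_arcs h) (Gh_w h) (uniform_solution h) = 2 * (real h - 1) / real h"
proof -
  have "(\<Sum>j = 1..<h. uniform_solution h (X j, X (Suc j))) = (\<Sum>j = 1..<h. 1 / real h)"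
    if "X = U \<or> X = V" for X
    using that by (intro sum.cong) (auto simp: uniform_solution_def unit_arcs_def)
  from this[of U] this[of V] show ?thesis
    using assms by (simp add: lp_cost_Gh of_nat_diff field_simps)
qed

lemma lp_feasible_uniform_solution:
  assumes h: "2 \<le> h"
  shows "lp_feasible (Gh_arcs h) (Gh_w h) S T (uniform_solution h)"
proof (rule lp_feasibleI_potentials)
  define phi where "phi v = (case v of S \<Rightarrow> 0 | T \<Rightarrow> 1 | U j \<Rightarrow> (real j - 1) / real h
      | V j \<Rightarrow> real j / real h)" for v
  define psi where "psi v = (case v of S \<Rightarrow> 1 | T \<Rightarrow> 0 | U j \<Rightarrow> real j / real h
      | V j \<Rightarrow> (real j - 1) / real h)" for v
  have "real h > 0" using h by simp
  then show "phi b - phi a \<le> uniform_solution h (a, b)"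
    and "psi b - psi a \<le> uniform_solution h (a, b)" if "(a, b) \<in> Gh_arcs h" for a b
    using that h unfolding Gh_arcs_def
    by (auto simp: phi_def psi_def uniform_solution_def unit_arcs_def divide_simps)
  show "1 \<le> phi T - phi S" "1 \<le> psi S - psi T"
    by (simp_all add: phi_def psi_def)
qed (auto simp: uniform_solution_def Gh_w_def)

lemma lp_opt_value_Gh:
  assumes "2 \<le> h"
  shows "lp_opt_value (Gh_arcs h) (Gh_w h) S T (2 * (real h - 1) / real h)"
  unfolding lp_opt_value_def
  using lp_feasible_uniform_solution lp_cost_uniform_solution lp_feasible_Gh_cost_ge assms by blast

lemma lp_optimal_Gh_level:
  assumes opt: "lp_optimal (Gh_arcs h) (Gh_w h) S T x" and i: "1 \<le> i" "i < h"
  shows "x (U i, U (Suc i)) + x (V i, V (Suc i)) = 2 / real h"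
proof -
  from i have h: "2 \<le> h" by simp
  have F: "lp_feasible (Gh_arcs h) (Gh_w h) S T x"
    using opt by (simp add: lp_optimal_def)
  let ?c = "lp_cost (Gh_arcs h) (Gh_w h) x"
  define g where "g j = x (U j, U (Suc j)) + x (V j, V (Suc j)) - 2 / real h" for j
  have c_le: "?c \<le> 2 * (real h - 1) / real h"
    using opt lp_feasible_uniform_solution[OF h] lp_cost_uniform_solution[OF h]
    unfolding lp_optimal_def by metis
  have "2 - 2 * (real h - 1) / real h = 2 / real h"
    using h by (simp add: field_simps)
  then have g_nonneg: "\<forall>j\<in>{1..<h}. 0 \<le> g j"
    using lp_feasible_Gh_level_bound[OF F] c_le unfolding g_def by force
  have "(\<Sum>j = 1..<h. g j) = ?c - real (h - 1) * (2 / real h)"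
    by (simp add: g_def sum_subtractf sum.distrib lp_cost_Gh)
  also have "\<dots> \<le> 0"
    using c_le h by (simp add: of_nat_diff field_simps)
  moreover have "0 \<le> (\<Sum>j = 1..<h. g j)"
    using g_nonneg by (auto intro: sum_nonneg)
  ultimately have "(\<Sum>j = 1..<h. g j) = 0"
    by linarith
  with g_nonneg have "\<forall>j\<in>{1..<h}. g j = 0"
    by (subst (asm) sum_nonneg_eq_0_iff) auto
  with i have "g i = 0"
    by simp
  then show ?thesis
    by (simp add: g_def)
qed

lemma lp_optimal_Gh_arc_le:
  assumes opt: "lp_optimal (Gh_arcs h) (Gh_w h) S T x" and e: "e \<in> Gh_arcs h"
  shows "x e \<le> 2 / real h"
proof (cases "e \<in> unit_arcs h")
  case True
  then obtain j where "1 \<le> j" "j \<le> h - 1" and e_cases: "e = (U j, U (Suc j)) \<or> e = (V j, V (Suc j))"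
    unfolding unit_arcs_def by auto
  then have j: "1 \<le> j" "j < h" by auto
  have "0 \<le> x (U j, U (Suc j))" "0 \<le> x (V j, V (Suc j))"
    using opt j by (auto simp: lp_optimal_def lp_feasible_def Gh_arcs_def unit_arcs_def)
  with e_cases show ?thesis
    using lp_optimal_Gh_level[OF opt j] by auto
next
  case False
  then have "x e = 0"
    using opt e by (simp add: lp_optimal_def lp_feasible_def Gh_w_def)
  then show ?thesis by simp
qed

lemma lp_optimal_Gh_not_frac_integral:
  assumes opt: "lp_optimal (Gh_arcs h) (Gh_w h) S T x" and l: "0 < l" "2 * l < h"
  shows "\<not> frac_integral l (Gh_arcs h) x"
proof
  assume "frac_integral l (Gh_arcs h) x"
  moreover have "(U 1, U 2) \<in> Gh_arcs h" "(V 1, V 2) \<in> Gh_arcs h"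
    using l unfolding Gh_arcs_def unit_arcs_def by auto
  ultimately obtain k1 k2 :: int where "x (U 1, U 2) = k1 / real l" "x (V 1, V 2) = k2 / real l"
    unfolding frac_integral_def by blast
  moreover have "x (U 1, U 2) + x (V 1, V 2) = 2 / real h"
    using lp_optimal_Gh_level[OF opt, of 1] l by (simp add: numeral_2_eq_2)
  ultimately have "real_of_int (k1 + k2) / real l = 2 / real h"
    by (simp add: add_divide_distrib)
  then have "real_of_int (k1 + k2) * real h = 2 * real l"
    using l by (simp add: field_simps)
  then have k: "(k1 + k2) * int h = 2 * int l"
    by (metis of_int_eq_iff of_int_mult of_int_of_nat_eq of_int_numeral)
  moreover have "0 < 2 * int l"
    using l by simp
  ultimately have "0 < k1 + k2"
    by (metis zero_less_mult_iff of_nat_less_0_iff)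
  then have "int h \<le> (k1 + k2) * int h"
    using mult_right_mono[of 1 "k1 + k2" "int h"] by simp
  with k l show False by simp
qed

theorem mainTheorem12:
  fixes h :: nat
  assumes "2 \<le> h"
  shows "lp_opt_value (Gh_arcs h) (Gh_w h) S T (2 * (real h - 1) / real h)
    \<and> (\<forall>x. lp_optimal (Gh_arcs h) (Gh_w h) S T x \<longrightarrow>
          (\<forall>i. 1 \<le> i \<and> i \<le> h - 1 \<longrightarrow>
             x (U i, U (Suc i)) + x (V i, V (Suc i)) = 2 / real h)
        \<and> (\<forall>e\<in>Gh_arcs h. x e \<le> 2 / real h))
    \<and> (\<forall>l::nat. 0 < l \<and> 2 * l < h \<longrightarrow>
          \<not> (\<exists>x. lp_optimal (Gh_arcs h) (Gh_w h) S T x \<and> frac_integral l (Gh_arcs h) x))"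
  using assms lp_opt_value_Gh lp_optimal_Gh_level lp_optimal_Gh_arc_le lp_optimal_Gh_not_frac_integral
  by auto

end
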